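(* For any $f,g\in[0,1]$ with $G(f)\ne G(g)$, where $G(h)=\overline{o}_1(h)^p\,\overline{o}_2(h)^{1-p}$, $$\lim_{n\to\infty}\mathbb{P}\big(W_0W_n(f)>V_0W_n(g)\big)=\begin{cases}1,& G(f)>G(g),\\ 0,& G(f)<G(g).\end{cases}$$
   Context: Fix real numbers $o_{11},o_{12},o_{21},o_{22}$ with $o_{11}>o_{12}\ge 0$, $o_{22}>o_{21}\ge 0$, $o_{11}>1$, $o_{22}>1$, and $p\in[0,1]$ (convention $0^0=1$). Let $x_1,x_2,\ldots$ be i.i.d. Bernoulli$(p)$. For $h\in[0,1]$ put $\overline{o}_1(h)=o_{11}h+o_{12}(1-h)$, $\overline{o}_2(h)=o_{21}h+o_{22}(1-h)$, and $W_n(h)=\prod_{i=1}^n\overline{o}_1(h)^{x_i}\overline{o}_2(h)^{1-x_i}$; both strategies use the same environment sequence. The random initial sizes $W_0,V_0$ are independent, each uniform on $[0,a]$ for some fixed $a>0$, and independent of $(x_i)$. *)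

theory Defs
  imports "HOL-Probability.Probability"
begin

text \<open>Real power with the convention 0^0 = 1 (Isabelle's powr has 0 powr 0 = 0).\<close>
definition pw :: "real \<Rightarrow> real \<Rightarrow> real" where
  "pw b e = (if e = 0 then 1 else b powr e)"

definition obar1 :: "real \<Rightarrow> real \<Rightarrow> real \<Rightarrow> real" where
  "obar1 o11 o12 h = o11 * h + o12 * (1 - h)"

definition obar2 :: "real \<Rightarrow> real \<Rightarrow> real \<Rightarrow> real" where
  "obar2 o21 o22 h = o21 * h + o22 * (1 - h)"

definition Gr :: "real \<Rightarrow> real \<Rightarrow> real \<Rightarrow> real \<Rightarrow> real \<Rightarrow> real \<Rightarrow> real" where
  "Gr o11 o12 o21 o22 p h = pw (obar1 o11 o12 h) p * pw (obar2 o21 o22 h) (1 - p)"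

text \<open>W_n(h) = prod_{i=1}^n obar1(h)^{x_i} obar2(h)^{1-x_i}, x_i in {0,1}
  (the factor is obar1(h) if x_i = 1 and obar2(h) if x_i = 0, matching 0^0 = 1).\<close>
definition Wn :: "real \<Rightarrow> real \<Rightarrow> real \<Rightarrow> real \<Rightarrow> (nat \<Rightarrow> 'a \<Rightarrow> real) \<Rightarrow> nat \<Rightarrow> real \<Rightarrow> 'a \<Rightarrow> real" where
  "Wn o11 o12 o21 o22 x n h \<omega> =
     (\<Prod>i\<in>{1..n}. if x i \<omega> = 1 then obar1 o11 o12 h else obar2 o21 o22 h)"

end

theory Submission
  imports Defs
begin

(* Let K_n be the number of successes among x_1, ..., x_n, so that
   W_n(h) = obar1(h)^K_n * obar2(h)^(n - K_n).  By Hoeffding's inequality K_n / n is close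
   to p with probability tending to 1, and for p in {0, 1} even K_n = n p almost surely.
   Comparing logarithms, every such typical K_n gives W_n(f) >= W_n(g) e^(n c) for some
   c > 0 as soon as G(f) > G(g).  Since W_0 > 0 almost surely, W_0 e^(n c) > V_0 with
   probability tending to 1, hence W_0 W_n(f) > V_0 W_n(g) with probability tending to 1.
   The case G(f) < G(g) follows by exchanging the roles of the two strategies. *)

(* For p in {0, 1} typicality demands K_n = n p exactly: there the factor belonging to the
   impossible outcome may vanish without affecting G, so a single such outcome would
   destroy the exponential gap. *)
definition typical :: "real \<Rightarrow> real \<Rightarrow> nat \<Rightarrow> real \<Rightarrow> bool" where
  "typical p \<epsilon> n s \<longleftrightarrow> \<bar>s - real n * p\<bar> < real n * \<epsilon> \<and> (p \<in> {0, 1} \<longrightarrow> s = real n * p)"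

lemma typical_interior:
  assumes "0 < p" "p < 1" "typical p (min p (1 - p)) n (real k)"
  shows "0 < k" "k < n"
proof -
  have "real n * min p (1 - p) \<le> real n * p" "real n * min p (1 - p) \<le> real n * (1 - p)"
    by (rule mult_left_mono; simp)+
  moreover have "real n * (1 - p) = real n - real n * p"
    by (simp add: right_diff_distrib)
  ultimately show "0 < k" "k < n"
    using assms(3) unfolding typical_def abs_less_iff by linarith+
qed

lemma power_exp_gap:
  fixes B D :: real
  assumes "0 \<le> D" "D < B"
  obtains c where "c > 0" "\<And>n. D ^ n * exp (real n * c) \<le> B ^ n"
proof
  define D' where "D' = max D (B / 2)"
  have D': "0 < D'" "D' < B" "D \<le> D'"
    using assms unfolding D'_def by auto
  show "ln (B / D') > 0"
    using D' by simp
  fix n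
  have "D ^ n * exp (real n * ln (B / D')) = (D * (B / D')) ^ n"
    using D' by (simp add: exp_of_nat_mult flip: power_mult_distrib)
  also have "\<dots> \<le> (D' * (B / D')) ^ n"
    using D' assms by (intro power_mono mult_right_mono) auto
  finally show "D ^ n * exp (real n * ln (B / D')) \<le> B ^ n"
    using D' by simp
qed

lemma power_exp_gap_near_mean:
  fixes A B C D p :: real
  assumes pos: "0 < A" "0 < B" "0 < C" "0 < D"
    and less: "C powr p * D powr (1 - p) < A powr p * B powr (1 - p)"
  obtains c \<epsilon> where "c > 0" "\<epsilon> > 0"
    "\<And>n k. k \<le> n \<Longrightarrow> \<bar>real k - real n * p\<bar> < real n * \<epsilon> \<Longrightarrow>
       C ^ k * D ^ (n - k) * exp (real n * c) \<le> A ^ k * B ^ (n - k)"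
proof
  define \<alpha> where "\<alpha> = ln A - ln C"
  define \<beta> where "\<beta> = ln B - ln D"
  define \<delta> where "\<delta> = p * \<alpha> + (1 - p) * \<beta>"
  have "ln (C powr p * D powr (1 - p)) < ln (A powr p * B powr (1 - p))"
    using less pos by simp
  then have "p * ln C + (1 - p) * ln D < p * ln A + (1 - p) * ln B"
    using pos by (simp add: ln_mult ln_powr)
  then show \<delta>: "\<delta> / 2 > 0"
    unfolding \<delta>_def \<alpha>_def \<beta>_def by (simp add: algebra_simps)
  define \<epsilon> where "\<epsilon> = \<delta> / (2 * (\<bar>\<alpha>\<bar> + \<bar>\<beta>\<bar> + 1))"
  show "\<epsilon> > 0"
    unfolding \<epsilon>_def using \<delta> by (simp add: add_nonneg_pos)
  fix n k :: nat
  assume "k \<le> n" and near: "\<bar>real k - real n * p\<bar> < real n * \<epsilon>"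
  have "\<bar>(real k - real n * p) * (\<alpha> - \<beta>)\<bar> \<le> real n * \<epsilon> * (\<bar>\<alpha>\<bar> + \<bar>\<beta>\<bar>)"
    unfolding abs_mult using near by (intro mult_mono) auto
  also have "\<dots> \<le> real n * (\<delta> / 2)"
    unfolding \<epsilon>_def using \<delta> by (simp add: field_simps mult_left_mono)
  finally have "- (real n * (\<delta> / 2)) \<le> (real k - real n * p) * (\<alpha> - \<beta>)"
    by linarith
  moreover have "real k * \<alpha> + (real n - real k) * \<beta>
      = real n * \<delta> + (real k - real n * p) * (\<alpha> - \<beta>)"
    unfolding \<delta>_def by (simp add: algebra_simps)
  ultimately have "real n * (\<delta> / 2) \<le> real k * \<alpha> + (real n - real k) * \<beta>"
    by linarith
  then have "real k * ln C + real (n - k) * ln D + real n * (\<delta> / 2)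
      \<le> real k * ln A + real (n - k) * ln B"
    using \<open>k \<le> n\<close> unfolding \<alpha>_def \<beta>_def by (simp add: algebra_simps)
  then have "exp (real k * ln C + real (n - k) * ln D + real n * (\<delta> / 2))
      \<le> exp (real k * ln A + real (n - k) * ln B)"
    by simp
  then show "C ^ k * D ^ (n - k) * exp (real n * (\<delta> / 2)) \<le> A ^ k * B ^ (n - k)"
    using pos by (simp add: exp_add exp_of_nat_mult)
qed

lemma typical_power_exp_gap_interior:
  fixes A B C D p :: real
  assumes nonneg: "0 \<le> A" "0 \<le> B" "0 \<le> C" "0 \<le> D" and p: "0 < p" "p < 1"
    and less: "C powr p * D powr (1 - p) < A powr p * B powr (1 - p)"
  obtains c \<epsilon> where "c > 0" "\<epsilon> > 0"
    "\<And>n k. k \<le> n \<Longrightarrow> typical p \<epsilon> n (real k) \<Longrightarrow>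
       0 < A ^ k * B ^ (n - k) \<and> C ^ k * D ^ (n - k) * exp (real n * c) \<le> A ^ k * B ^ (n - k)"
proof -
  have "0 \<le> C powr p * D powr (1 - p)"
    by simp
  with less have "A powr p * B powr (1 - p) \<noteq> 0"
    by linarith
  with nonneg have AB: "0 < A" "0 < B"
    by auto
  show ?thesis
  proof (cases "C = 0 \<or> D = 0")
    case True
    have "0 < min p (1 - p)"
      using p by simp
    then show ?thesis
    proof (rule that[OF zero_less_one])
      fix n k
      assume "k \<le> n" "typical p (min p (1 - p)) n (real k)"
      with p True have zero: "C ^ k * D ^ (n - k) = 0"
        using typical_interior by auto
      from AB show "0 < A ^ k * B ^ (n - k) \<and> C ^ k * D ^ (n - k) * exp (real n * 1) \<le> A ^ k * B ^ (n - k)"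
        by (simp add: zero)
    qed
  next
    case False
    with nonneg have CD: "0 < C" "0 < D"
      by auto
    obtain c \<epsilon> where "c > 0" "\<epsilon> > 0" and gap: "\<And>n k. k \<le> n \<Longrightarrow>
        \<bar>real k - real n * p\<bar> < real n * \<epsilon> \<Longrightarrow> C ^ k * D ^ (n - k) * exp (real n * c) \<le> A ^ k * B ^ (n - k)"
      using power_exp_gap_near_mean[OF AB CD less] by blast
    with AB show ?thesis
      by (intro that[of c \<epsilon>]) (simp_all add: typical_def)
  qed
qed

lemma typical_power_exp_gap:
  fixes A B C D p :: real
  assumes nonneg: "0 \<le> A" "0 \<le> B" "0 \<le> C" "0 \<le> D" and p: "p \<in> {0..1}"
    and less: "pw C p * pw D (1 - p) < pw A p * pw B (1 - p)"
  obtains c \<epsilon> where "c > 0" "\<epsilon> > 0"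
    "\<And>n k. k \<le> n \<Longrightarrow> typical p \<epsilon> n (real k) \<Longrightarrow>
       0 < A ^ k * B ^ (n - k) \<and> C ^ k * D ^ (n - k) * exp (real n * c) \<le> A ^ k * B ^ (n - k)"
proof -
  consider "p = 0" | "p = 1" | "0 < p" "p < 1"
    using p unfolding atLeastAtMost_iff less_le by blast
  then show ?thesis
  proof cases
    case 1
    with less nonneg have "D < B"
      by (simp add: pw_def)
    then obtain c where "c > 0" and gap: "\<And>n. D ^ n * exp (real n * c) \<le> B ^ n"
      using power_exp_gap nonneg by blast
    have k_zero: "k = 0" if "typical p 1 n (real k)" for n k
      using that 1 by (simp add: typical_def)
    from gap \<open>D < B\<close> nonneg show ?thesis
      by (intro that[OF \<open>c > 0\<close> zero_less_one]) (auto dest: k_zero)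
  next
    case 2
    with less nonneg have "C < A"
      by (simp add: pw_def)
    then obtain c where "c > 0" and gap: "\<And>n. C ^ n * exp (real n * c) \<le> A ^ n"
      using power_exp_gap nonneg by blast
    have k_full: "k = n" if "typical p 1 n (real k)" for n k
      using that 2 by (simp add: typical_def)
    from gap \<open>C < A\<close> nonneg show ?thesis
      by (intro that[OF \<open>c > 0\<close> zero_less_one]) (auto dest: k_full)
  next
    case 3
    with less have "C powr p * D powr (1 - p) < A powr p * B powr (1 - p)"
      by (simp add: pw_def)
    then show ?thesis
      by (rule typical_power_exp_gap_interior[OF nonneg 3 _ that])
  qed
qed

lemma sum_zero_one_eq_card:
  fixes f :: "'b \<Rightarrow> real"
  assumes "finite I" "\<And>i. i \<in> I \<Longrightarrow> f i \<in> {0, 1}"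
  shows "(\<Sum>i\<in>I. f i) = real (card {i\<in>I. f i = 1})"
proof -
  have "(\<Sum>i\<in>I. f i) = (\<Sum>i\<in>I. if f i = 1 then 1 else 0)"
    using assms(2) by (intro sum.cong) auto
  also have "\<dots> = real (card {i\<in>I. f i = 1})"
    using assms(1) by (simp add: sum.If_cases Int_def)
  finally show ?thesis .
qed

lemma Wn_eq_power:
  "Wn o11 o12 o21 o22 x n h \<omega> =
     obar1 o11 o12 h ^ card {i\<in>{1..n}. x i \<omega> = 1} * obar2 o21 o22 h ^ (n - card {i\<in>{1..n}. x i \<omega> = 1})"
proof -
  have e1: "{1..n} \<inter> {i. x i \<omega> = 1} = {i\<in>{1..n}. x i \<omega> = 1}"
    and e2: "{1..n} \<inter> - {i. x i \<omega> = 1} = {1..n} - {i\<in>{1..n}. x i \<omega> = 1}"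
    by auto
  show ?thesis
    unfolding Wn_def prod.If_cases[OF finite_atLeastAtMost] e1 e2 prod_constant
    by (subst card_Diff_subset) auto
qed

lemma borel_measurable_Wn [measurable]:
  assumes [measurable]: "\<And>i. x i \<in> borel_measurable M"
  shows "Wn o11 o12 o21 o22 x n h \<in> borel_measurable M"
  unfolding Wn_def by measurable

context prob_space
begin

lemma indep_sets_reindex:
  assumes "inj_on f I" "indep_sets F (f ` I)"
  shows "indep_sets (\<lambda>i. F (f i)) I"
  unfolding indep_sets_def
proof (intro conjI ballI allI impI)
  show "F (f i) \<subseteq> events" if "i \<in> I" for i
    using assms(2) that by (auto simp: indep_sets_def)
  fix J A assume J: "J \<subseteq> I" "J \<noteq> {}" "finite J" and A: "A \<in> Pi J (\<lambda>i. F (f i))"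
  have inj: "inj_on f J"
    using assms(1) J(1) by (rule inj_on_subset)
  define B where "B k = A (the_inv_into J f k)" for k
  have B: "B (f j) = A j" if "j \<in> J" for j
    unfolding B_def using inj that by (simp add: the_inv_into_f_f)
  have "prob (\<Inter>k\<in>f ` J. B k) = (\<Prod>k\<in>f ` J. prob (B k))"
    using assms(2) J A by (intro indep_setsD[of F "f ` I"]) (auto simp: B)
  then show "prob (\<Inter>j\<in>J. A j) = (\<Prod>j\<in>J. prob (A j))"
    using inj by (simp add: prod.reindex B cong: INF_cong)
qed

lemma indep_vars_reindex:
  assumes "inj_on f I" "indep_vars M' X (f ` I)"
  shows "indep_vars (\<lambda>i. M' (f i)) (\<lambda>i. X (f i)) I"
  using assms unfolding indep_vars_def2 by (auto intro: indep_sets_reindex)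

lemma weak_law_bounded_indep:
  fixes X :: "nat \<Rightarrow> 'a \<Rightarrow> real"
  assumes indep: "indep_vars (\<lambda>_. borel) X UNIV"
    and bounded: "\<And>i. AE \<omega> in M. X i \<omega> \<in> {a..b}" and "a < b"
    and mean: "\<And>i. expectation (X i) = \<mu>" and "\<epsilon> > 0"
  shows "(\<lambda>n. prob {\<omega>\<in>space M. \<bar>(\<Sum>i\<in>{1..n}. X i \<omega>) - real n * \<mu>\<bar> < real n * \<epsilon>}) \<longlonglongrightarrow> 1"
proof -
  have [measurable]: "random_variable borel (X i)" for i
    using indep unfolding indep_vars_def by blast
  define d where "d = (b - a)\<^sup>2"
  define r where "r = 2 * \<epsilon>\<^sup>2 / d"
  have "d > 0" "r > 0"
    using \<open>a < b\<close> \<open>\<epsilon> > 0\<close> unfolding r_def d_def by simp_all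
  have bound: "1 - 2 * exp (- r) ^ n
      \<le> prob {\<omega>\<in>space M. \<bar>(\<Sum>i\<in>{1..n}. X i \<omega>) - real n * \<mu>\<bar> < real n * \<epsilon>}"
    if "n \<ge> 1" for n
  proof -
    interpret Hoeffding_ineq M "{1..n}" X "\<lambda>_. a" "\<lambda>_. b" "real n * \<mu>"
      using indep_vars_subset[OF indep] bounded by unfold_locales (auto simp: mean)
    have "prob {\<omega>\<in>space M. \<bar>(\<Sum>i\<in>{1..n}. X i \<omega>) - real n * \<mu>\<bar> \<ge> real n * \<epsilon>}
        \<le> 2 * exp (- 2 * (real n * \<epsilon>)\<^sup>2 / (\<Sum>i\<in>{1..n}. (b - a)\<^sup>2))"
      using \<open>a < b\<close> \<open>\<epsilon> > 0\<close> that by (intro Hoeffding_ineq_abs_ge) auto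
    also have "\<dots> = 2 * exp (- r) ^ n"
      using \<open>d > 0\<close> that
      by (simp add: r_def flip: d_def exp_of_nat_mult) (simp add: power2_eq_square field_simps)
    finally have "1 - 2 * exp (- r) ^ n \<le>
        1 - prob {\<omega>\<in>space M. real n * \<epsilon> \<le> \<bar>(\<Sum>i\<in>{1..n}. X i \<omega>) - real n * \<mu>\<bar>}"
      by simp
    also have "\<dots> = prob {\<omega>\<in>space M. \<bar>(\<Sum>i\<in>{1..n}. X i \<omega>) - real n * \<mu>\<bar> < real n * \<epsilon>}"
      by (subst prob_neg[symmetric]) (auto simp: not_le)
    finally show ?thesis .
  qed
  have "(\<lambda>n. 1 - 2 * exp (- r) ^ n) \<longlonglongrightarrow> 1 - 2 * 0"
    using \<open>r > 0\<close> by (intro tendsto_intros LIMSEQ_power_zero) simp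
  then have lim: "(\<lambda>n. 1 - 2 * exp (- r) ^ n) \<longlonglongrightarrow> 1"
    by simp
  show ?thesis
  proof (rule tendsto_sandwich[OF _ _ lim tendsto_const])
    show "\<forall>\<^sub>F n in sequentially. 1 - 2 * exp (- r) ^ n
        \<le> prob {\<omega>\<in>space M. \<bar>(\<Sum>i\<in>{1..n}. X i \<omega>) - real n * \<mu>\<bar> < real n * \<epsilon>}"
      using bound by (rule eventually_sequentiallyI)
  qed simp
qed

lemma expectation_zero_one:
  assumes "\<And>\<omega>. \<omega> \<in> space M \<Longrightarrow> X \<omega> \<in> {0, 1}" "random_variable borel X"
  shows "expectation X = prob {\<omega>\<in>space M. X \<omega> = 1}"
proof -
  have "expectation X = expectation (indicator {\<omega>\<in>space M. X \<omega> = 1})"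
    using assms(1) by (intro Bochner_Integration.integral_cong) (auto simp: indicator_def)
  then show ?thesis
    by (simp add: Int_absorb2)
qed

lemma AE_degenerate_zero_one:
  assumes "\<And>\<omega>. \<omega> \<in> space M \<Longrightarrow> X \<omega> \<in> {0, 1}" "random_variable borel X"
    and "prob {\<omega>\<in>space M. X \<omega> = 1} = p" "p \<in> {0, 1}"
  shows "AE \<omega> in M. X \<omega> = p"
proof (cases "p = 1")
  case True
  with assms(3) have "prob {\<omega>\<in>space M. X \<omega> = 1} = 1"
    by simp
  with assms(2) True show ?thesis
    by (subst (asm) prob_Collect_eq_1) auto
next
  case False
  with assms(4) have "p = 0"
    by simp
  with assms(3) have "prob {\<omega>\<in>space M. X \<omega> = 1} = 0"
    by simp
  with assms(2) have "AE \<omega> in M. X \<omega> \<noteq> 1"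
    by (subst (asm) prob_Collect_eq_0) auto
  with AE_space show ?thesis
    by eventually_elim (use assms(1) \<open>p = 0\<close> in force)
qed

lemma AE_pos_if_uniform:
  fixes Z :: "'a \<Rightarrow> real"
  assumes [measurable]: "random_variable borel Z"
    and distr: "distr M lborel Z = uniform_measure lborel {0..a}" and "a > 0"
  shows "AE \<omega> in M. 0 < Z \<omega>"
proof -
  have "AE z in lborel. z \<in> {0..a} \<longrightarrow> 0 < z"
    using AE_lborel_singleton[of 0] by eventually_elim auto
  then have "AE z in distr M lborel Z. 0 < z"
    unfolding distr using \<open>a > 0\<close> by (subst AE_uniform_measure) auto
  then show ?thesis
    by (subst (asm) AE_distr_iff) auto
qed

lemma prob_less_mult_tendsto_1:
  fixes W V :: "'a \<Rightarrow> real" and r :: "nat \<Rightarrow> real"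
  assumes [measurable]: "random_variable borel W" "random_variable borel V"
    and pos: "AE \<omega> in M. 0 < W \<omega>" and "incseq r" and r: "filterlim r at_top sequentially"
  shows "(\<lambda>n. prob {\<omega>\<in>space M. 0 < W \<omega> \<and> V \<omega> < W \<omega> * r n}) \<longlonglongrightarrow> 1"
proof -
  let ?A = "\<lambda>n. {\<omega>\<in>space M. 0 < W \<omega> \<and> V \<omega> < W \<omega> * r n}"
  have "incseq ?A"
    using \<open>incseq r\<close> by (auto simp: incseq_def intro: less_le_trans mult_left_mono)
  then have "(\<lambda>n. prob (?A n)) \<longlonglongrightarrow> prob (\<Union>n. ?A n)"
    by (intro finite_Lim_measure_incseq) auto
  also have "(\<Union>n. ?A n) = {\<omega>\<in>space M. 0 < W \<omega>}"
  proof safe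
    fix \<omega> assume "\<omega> \<in> space M" "0 < W \<omega>"
    from r have "\<forall>\<^sub>F n in sequentially. V \<omega> / W \<omega> < r n"
      by (simp add: filterlim_at_top_dense)
    then obtain n where "V \<omega> / W \<omega> < r n"
      by (auto simp: eventually_sequentially)
    with \<open>0 < W \<omega>\<close> \<open>\<omega> \<in> space M\<close> show "\<omega> \<in> (\<Union>n. ?A n)"
      by (auto simp: divide_less_eq mult.commute)
  qed
  also have "prob {\<omega>\<in>space M. 0 < W \<omega>} = 1"
    using pos by (simp add: prob_Collect_eq_1)
  finally show ?thesis .
qed

lemma prob_Int_tendsto_1:
  assumes "\<And>n. S n \<in> events" "\<And>n. T n \<in> events" "\<And>n. E n \<in> events"
    and "(\<lambda>n. prob (S n)) \<longlonglongrightarrow> 1" "(\<lambda>n. prob (T n)) \<longlonglongrightarrow> 1"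
    and "\<And>n. S n \<inter> T n \<subseteq> E n"
  shows "(\<lambda>n. prob (E n)) \<longlonglongrightarrow> 1"
proof (rule tendsto_sandwich[OF _ _ _ tendsto_const])
  have "prob (S n) + prob (T n) - 1 \<le> prob (E n)" for n
  proof -
    have "prob (S n \<union> T n) = prob (S n) + prob (T n) - prob (S n \<inter> T n)"
      using assms(1,2) by (intro measure_Un3) (simp_all add: fmeasurable_eq_sets)
    moreover have "prob (S n \<inter> T n) \<le> prob (E n)"
      using assms(3,6) by (intro finite_measure_mono) auto
    ultimately show ?thesis
      using prob_le_1[of "S n \<union> T n"] by linarith
  qed
  then show "\<forall>\<^sub>F n in sequentially. prob (S n) + prob (T n) - 1 \<le> prob (E n)"
    by simp
  show "(\<lambda>n. prob (S n) + prob (T n) - 1) \<longlonglongrightarrow> 1"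
    using tendsto_diff[OF tendsto_add[OF assms(4,5)] tendsto_const[of 1]] by simp
qed simp

lemma prob_tendsto_0_if_disjoint:
  assumes "\<And>n. A n \<in> events" "\<And>n. B n \<in> events" "\<And>n. A n \<inter> B n = {}"
    and "(\<lambda>n. prob (B n)) \<longlonglongrightarrow> 1"
  shows "(\<lambda>n. prob (A n)) \<longlonglongrightarrow> 0"
proof (rule tendsto_sandwich[OF _ _ tendsto_const])
  have "prob (A n) + prob (B n) \<le> 1" for n
  proof -
    have "prob (A n) + prob (B n) = prob (A n \<union> B n)"
      using assms(1-3) by (simp add: finite_measure_Union)
    also have "\<dots> \<le> 1"
      by (rule prob_le_1)
    finally show ?thesis .
  qed
  then show "\<forall>\<^sub>F n in sequentially. prob (A n) \<le> 1 - prob (B n)"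
    by (simp add: algebra_simps)
  show "(\<lambda>n. 1 - prob (B n)) \<longlonglongrightarrow> 0"
    using tendsto_diff[OF tendsto_const[of 1] assms(4)] by simp
qed simp

lemma prob_mult_less_mult_tendsto_1:
  fixes W V :: "'a \<Rightarrow> real" and F G :: "nat \<Rightarrow> 'a \<Rightarrow> real"
  assumes [measurable]: "random_variable borel W" "random_variable borel V"
      "\<And>n. random_variable borel (F n)" "\<And>n. random_variable borel (G n)"
    and W_pos: "AE \<omega> in M. 0 < W \<omega>" and "c > 0"
    and S: "\<And>n. S n \<in> events" "(\<lambda>n. prob (S n)) \<longlonglongrightarrow> 1"
    and dominates: "\<And>n \<omega>. \<omega> \<in> S n \<Longrightarrow> 0 < F n \<omega> \<and> 0 \<le> G n \<omega> \<and> G n \<omega> * exp (real n * c) \<le> F n \<omega>"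
  shows "(\<lambda>n. prob {\<omega>\<in>space M. V \<omega> * G n \<omega> < W \<omega> * F n \<omega>}) \<longlonglongrightarrow> 1"
proof (rule prob_Int_tendsto_1[OF S(1) _ _ S(2)])
  let ?T = "\<lambda>n. {\<omega>\<in>space M. 0 < W \<omega> \<and> V \<omega> < W \<omega> * exp (real n * c)}"
  have "filterlim (\<lambda>n. exp (real n * c)) at_top sequentially"
    using \<open>c > 0\<close> by (intro filterlim_compose[OF exp_at_top]
      filterlim_at_top_mult_tendsto_pos[OF tendsto_const] filterlim_real_sequentially)
  moreover have "incseq (\<lambda>n. exp (real n * c))"
    using \<open>c > 0\<close> by (simp add: incseq_def mult_right_mono)
  ultimately show "(\<lambda>n. prob (?T n)) \<longlonglongrightarrow> 1"
    using W_pos by (intro prob_less_mult_tendsto_1) auto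
  show "S n \<inter> ?T n \<subseteq> {\<omega>\<in>space M. V \<omega> * G n \<omega> < W \<omega> * F n \<omega>}" for n
  proof safe
    fix \<omega> assume "\<omega> \<in> S n" "\<omega> \<in> space M" "0 < W \<omega>" and V: "V \<omega> < W \<omega> * exp (real n * c)"
    with dominates have F: "0 < F n \<omega>" and G: "0 \<le> G n \<omega>" "G n \<omega> * exp (real n * c) \<le> F n \<omega>"
      by auto
    show "V \<omega> * G n \<omega> < W \<omega> * F n \<omega>"
    proof (cases "G n \<omega> = 0")
      case True
      with F \<open>0 < W \<omega>\<close> show ?thesis
        by simp
    next
      case False
      with G have "V \<omega> * G n \<omega> < W \<omega> * exp (real n * c) * G n \<omega>"
        using V by (intro mult_strict_right_mono) auto
      also have "\<dots> \<le> W \<omega> * F n \<omega>"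
        using G \<open>0 < W \<omega>\<close> by (simp add: mult.assoc mult.commute[of "exp _"])
      finally show ?thesis .
    qed
  qed
qed auto

end

locale bernoulli_sequence = prob_space +
  fixes x :: "nat \<Rightarrow> 'a \<Rightarrow> real" and p :: real
  assumes indep: "indep_vars (\<lambda>_. borel) x UNIV"
    and zero_one: "\<And>i \<omega>. \<omega> \<in> space M \<Longrightarrow> x i \<omega> \<in> {0, 1}"
    and prob_one: "\<And>i. prob {\<omega>\<in>space M. x i \<omega> = 1} = p"
begin

lemma random_variable [measurable]: "random_variable borel (x i)"
  using indep unfolding indep_vars_def by blast

lemma parameter_bounds: "p \<in> {0..1}"
  using prob_one[of 0] measure_nonneg prob_le_1 by force

lemma prob_typical_tendsto_1:
  assumes "\<epsilon> > 0"
  shows "(\<lambda>n. prob {\<omega>\<in>space M. typical p \<epsilon> n (\<Sum>i\<in>{1..n}. x i \<omega>)}) \<longlonglongrightarrow> 1"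
proof (cases "p \<in> {0, 1}")
  case True
  have [measurable]: "Measurable.pred M (\<lambda>\<omega>. typical p \<epsilon> n (\<Sum>i\<in>{1..n}. x i \<omega>))" for n
    unfolding typical_def by measurable
  have "AE \<omega> in M. \<forall>i. x i \<omega> = p"
    using AE_degenerate_zero_one[OF zero_one _ prob_one True] by (simp add: AE_all_countable)
  then have AE_typical: "AE \<omega> in M. typical p \<epsilon> n (\<Sum>i\<in>{1..n}. x i \<omega>)" if "n \<ge> 1" for n
    by eventually_elim (use that \<open>\<epsilon> > 0\<close> True in \<open>simp add: typical_def\<close>)
  have "prob {\<omega>\<in>space M. typical p \<epsilon> n (\<Sum>i\<in>{1..n}. x i \<omega>)} = 1" if "n \<ge> 1" for n
  proof -
    have "{\<omega>\<in>space M. typical p \<epsilon> n (\<Sum>i\<in>{1..n}. x i \<omega>)} \<in> events"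
      by measurable
    with AE_typical[OF that] show ?thesis
      by (simp add: prob_Collect_eq_1)
  qed
  then show ?thesis
    by (intro tendsto_eventually eventually_sequentiallyI)
next
  case False
  have "expectation (x i) = p" for i
    using expectation_zero_one[OF zero_one] prob_one by simp
  moreover have "AE \<omega> in M. x i \<omega> \<in> {0..1}" for i
    using zero_one[of _ i] by (intro AE_I2) fastforce
  ultimately have "(\<lambda>n. prob {\<omega>\<in>space M. \<bar>(\<Sum>i\<in>{1..n}. x i \<omega>) - real n * p\<bar> < real n * \<epsilon>}) \<longlonglongrightarrow> 1"
    using weak_law_bounded_indep[OF indep _ zero_less_one _ \<open>\<epsilon> > 0\<close>] by blast
  with False show ?thesis
    by (simp add: typical_def)
qed

lemma prob_Wn_less_tendsto_1:
  fixes W V :: "'a \<Rightarrow> real"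
  assumes [measurable]: "random_variable borel W" "random_variable borel V"
    and W_pos: "AE \<omega> in M. 0 < W \<omega>"
    and o_nonneg: "0 \<le> o11" "0 \<le> o12" "0 \<le> o21" "0 \<le> o22"
    and "f \<in> {0..1}" "g \<in> {0..1}"
    and less: "Gr o11 o12 o21 o22 p g < Gr o11 o12 o21 o22 p f"
  shows "(\<lambda>n. prob {\<omega>\<in>space M.
            V \<omega> * Wn o11 o12 o21 o22 x n g \<omega> < W \<omega> * Wn o11 o12 o21 o22 x n f \<omega>}) \<longlonglongrightarrow> 1"
proof -
  have obar_nonneg: "0 \<le> obar1 o11 o12 h" "0 \<le> obar2 o21 o22 h" if "h \<in> {0..1}" for h
    using that o_nonneg unfolding obar1_def obar2_def by simp_all
  obtain c \<epsilon> where "c > 0" "\<epsilon> > 0" and gap: "\<And>n k. k \<le> n \<Longrightarrow> typical p \<epsilon> n (real k) \<Longrightarrow>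
      0 < obar1 o11 o12 f ^ k * obar2 o21 o22 f ^ (n - k) \<and>
      obar1 o11 o12 g ^ k * obar2 o21 o22 g ^ (n - k) * exp (real n * c)
        \<le> obar1 o11 o12 f ^ k * obar2 o21 o22 f ^ (n - k)"
    using typical_power_exp_gap[OF obar_nonneg[OF \<open>f \<in> _\<close>] obar_nonneg[OF \<open>g \<in> _\<close>] parameter_bounds]
      less
    unfolding Gr_def by blast
  define S where "S n = {\<omega>\<in>space M. typical p \<epsilon> n (\<Sum>i\<in>{1..n}. x i \<omega>)}" for n
  show ?thesis
  proof (rule prob_mult_less_mult_tendsto_1[OF _ _ _ _ W_pos \<open>c > 0\<close>])
    show "S n \<in> events" for n
      unfolding S_def typical_def by measurable
    show "(\<lambda>n. prob (S n)) \<longlonglongrightarrow> 1"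
      unfolding S_def using \<open>\<epsilon> > 0\<close> by (rule prob_typical_tendsto_1)
    fix n \<omega>
    assume "\<omega> \<in> S n"
    then have "\<omega> \<in> space M" "typical p \<epsilon> n (\<Sum>i\<in>{1..n}. x i \<omega>)"
      unfolding S_def by simp_all
    define k where "k = card {i\<in>{1..n}. x i \<omega> = 1}"
    have "k \<le> card {1..n}"
      unfolding k_def by (rule card_mono) auto
    moreover have "(\<Sum>i\<in>{1..n}. x i \<omega>) = real k"
      unfolding k_def using zero_one[OF \<open>\<omega> \<in> space M\<close>] by (intro sum_zero_one_eq_card) auto
    ultimately show "0 < Wn o11 o12 o21 o22 x n f \<omega> \<and> 0 \<le> Wn o11 o12 o21 o22 x n g \<omega> \<and>
        Wn o11 o12 o21 o22 x n g \<omega> * exp (real n * c) \<le> Wn o11 o12 o21 o22 x n f \<omega>"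
      using gap \<open>typical p \<epsilon> n _\<close> obar_nonneg[OF \<open>g \<in> _\<close>]
      unfolding Wn_eq_power k_def[symmetric] by simp
  qed measurable
qed

lemma prob_Wn_greater_tendsto_0:
  fixes W V :: "'a \<Rightarrow> real"
  assumes [measurable]: "random_variable borel W" "random_variable borel V"
    and V_pos: "AE \<omega> in M. 0 < V \<omega>"
    and o_nonneg: "0 \<le> o11" "0 \<le> o12" "0 \<le> o21" "0 \<le> o22"
    and "f \<in> {0..1}" "g \<in> {0..1}"
    and less: "Gr o11 o12 o21 o22 p f < Gr o11 o12 o21 o22 p g"
  shows "(\<lambda>n. prob {\<omega>\<in>space M.
            V \<omega> * Wn o11 o12 o21 o22 x n g \<omega> < W \<omega> * Wn o11 o12 o21 o22 x n f \<omega>}) \<longlonglongrightarrow> 0"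
proof -
  let ?win = "\<lambda>n. {\<omega>\<in>space M. V \<omega> * Wn o11 o12 o21 o22 x n g \<omega> < W \<omega> * Wn o11 o12 o21 o22 x n f \<omega>}"
  let ?lose = "\<lambda>n. {\<omega>\<in>space M. W \<omega> * Wn o11 o12 o21 o22 x n f \<omega> < V \<omega> * Wn o11 o12 o21 o22 x n g \<omega>}"
  have "(\<lambda>n. prob (?lose n)) \<longlonglongrightarrow> 1"
    using prob_Wn_less_tendsto_1[OF assms(2,1) V_pos o_nonneg \<open>g \<in> _\<close> \<open>f \<in> _\<close> less] .
  moreover have "?win n \<in> events" "?lose n \<in> events" for n
    by measurable
  moreover have "?win n \<inter> ?lose n = {}" for n
    using less_asym by blast
  ultimately show ?thesis
    by (intro prob_tendsto_0_if_disjoint[of ?win ?lose])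
qed

end

theorem proposition7:
  fixes M :: "'a measure"
    and x :: "nat \<Rightarrow> 'a \<Rightarrow> real"
    and W0 V0 :: "'a \<Rightarrow> real"
    and o11 o12 o21 o22 p a f g :: real
  assumes "prob_space M"
    and "o11 > o12" "o12 \<ge> 0" "o22 > o21" "o21 \<ge> 0" "o11 > 1" "o22 > 1"
    and "p \<in> {0..1}"
    and "a > 0"
    and x_vals: "\<And>i \<omega>. \<omega> \<in> space M \<Longrightarrow> x i \<omega> \<in> {0, 1}"
    and x_bern: "\<And>i. measure M {\<omega> \<in> space M. x i \<omega> = 1} = p"
    and W0_unif: "distr M lborel W0 = uniform_measure lborel {0..a}"
    and V0_unif: "distr M lborel V0 = uniform_measure lborel {0..a}"
    and indep: "prob_space.indep_vars M (\<lambda>_. borel)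
                  (case_sum x (\<lambda>b. if b then W0 else V0)) UNIV"
    and "f \<in> {0..1}" "g \<in> {0..1}"
    and "Gr o11 o12 o21 o22 p f \<noteq> Gr o11 o12 o21 o22 p g"
  shows "(\<lambda>n. measure M {\<omega> \<in> space M.
            W0 \<omega> * Wn o11 o12 o21 o22 x n f \<omega> > V0 \<omega> * Wn o11 o12 o21 o22 x n g \<omega>})
         \<longlonglongrightarrow> (if Gr o11 o12 o21 o22 p f > Gr o11 o12 o21 o22 p g then 1 else 0)"
proof -
  interpret prob_space M by fact
  have rv: "random_variable borel (case_sum x (\<lambda>b. if b then W0 else V0) k)" for k
    using indep unfolding indep_vars_def by blast
  have W0_V0 [measurable]: "random_variable borel W0" "random_variable borel V0"
    using rv[of "Inr True"] rv[of "Inr False"] by simp_all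
  have "indep_vars (\<lambda>_. borel) x UNIV"
    using indep_vars_reindex[OF inj_Inl indep_vars_subset[OF indep subset_UNIV]] by simp
  then interpret bernoulli_sequence M x p
    using x_vals x_bern by unfold_locales
  have W0_pos: "AE \<omega> in M. 0 < W0 \<omega>" and V0_pos: "AE \<omega> in M. 0 < V0 \<omega>"
    using AE_pos_if_uniform W0_unif V0_unif \<open>a > 0\<close> by auto
  have o_nonneg: "0 \<le> o11" "0 \<le> o12" "0 \<le> o21" "0 \<le> o22"
    using assms(2-5) by simp_all
  note win = prob_Wn_less_tendsto_1[OF W0_V0 W0_pos o_nonneg \<open>f \<in> _\<close> \<open>g \<in> _\<close>]
  note lose = prob_Wn_greater_tendsto_0[OF W0_V0 V0_pos o_nonneg \<open>f \<in> _\<close> \<open>g \<in> _\<close>]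
  show ?thesis
    using win lose \<open>Gr o11 o12 o21 o22 p f \<noteq> Gr o11 o12 o21 o22 p g\<close>
    by (cases "Gr o11 o12 o21 o22 p g < Gr o11 o12 o21 o22 p f") auto
qed

end
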